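(* Let $V_{Horn}$ be the set of matrices $A\in\partial\mathcal{CP}_5\cap\mathcal{DNN}_5^\circ$ that are orthogonal to some matrix of the form $DHD$ with $D$ a positive diagonal matrix. Then $V_{Horn}$ is the image of $Z_{Horn}$ under the map $\varphi: W\to Sym_5$, $\varphi(X)=XX^{\mathsf T}$.
   Context: $Sym_5$ is the space of real symmetric $5\times 5$ matrices with inner product $\langle A,B\rangle=\operatorname{trace}(A^{\mathsf T}B)$. $\mathcal{CP}_5$ is the cone of matrices $BB^{\mathsf T}$ with $B$ a real $5\times k$ matrix with nonnegative entries; $\mathcal{DNN}_5$ is the cone of positive semidefinite $5\times 5$ matrices with nonnegative entries; $\partial$ and ${}^\circ$ denote boundary and interior in the Euclidean topology. $H$ is the Horn matrix \[H=\begin{pmatrix} 1 & -1 &1& 1& -1 \\ -1 & 1& -1 &1& 1\\ 1 & -1 & 1 & -1 & 1\\ 1 & 1& -1&1& -1\\ -1&1&1&-1&1\end{pmatrix}.\] $W$ is the set of (nonnegative) $5\times 5$ matrices of the form \[\begin{pmatrix} y_{11}& 0&0& y_{41}& y_{51} \\ y_{12} & y_{22}& 0 &0& y_{52}\\ y_{13 }& y_{23}& y_{33} & 0& 0\\ 0 & y_{24}& y_{34}&y_{44}& 0\\ 0&0&y_{35}&y_{45}& y_{55}\end{pmatrix}.\] $Z_{Horn}\subset W$ is the set of all matrices $DB$ where $D$ is a diagonal matrix with positive diagonal entries and \[B = \begin{pmatrix} 1& 0&0& y_4& y_5+1 \\ y_1+1 & 1& 0 &0& y_5\\ y_1 & y_2+1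 & 1 & 0& 0\\ 0 & y_2& y_3+1&1& 0\\ 0&0&y_3&y_4+1&1\end{pmatrix}\operatorname{diag}(z_1,\dots,z_5)\] with $y_1,\dots,y_5,z_1,\dots,z_5$ positive reals. *)

theory Defs
  imports "HOL-Analysis.Analysis"
begin

type_synonym mat5 = "real^5^5"

text \<open>Matrices are real^5^5 with A $ i $ j the entry in row i, column j.
  Rows/columns are indexed 1,2,3,4,5 (numerals of type 5) in the order given by vector.\<close>

definition Sym5 :: "mat5 set" where
  "Sym5 = {A. transpose A = A}"

definition inner5 :: "mat5 \<Rightarrow> mat5 \<Rightarrow> real" where
  "inner5 A B = trace (transpose A ** B)"

text \<open>Completely positive cone: matrices B B^T with B a nonnegative 5 x k matrix;
  the columns of B are b 0, ..., b (k-1).\<close>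
definition CP5 :: "mat5 set" where
  "CP5 = {A. \<exists>(k::nat) (b::nat \<Rightarrow> real^5).
            (\<forall>l<k. \<forall>i. b l $ i \<ge> 0) \<and>
            A = (\<chi> i j. \<Sum>l<k. b l $ i * b l $ j)}"

definition psd5 :: "mat5 \<Rightarrow> bool" where
  "psd5 A \<longleftrightarrow> A \<in> Sym5 \<and> (\<forall>x::real^5. x \<bullet> (A *v x) \<ge> 0)"

definition DNN5 :: "mat5 set" where
  "DNN5 = {A. psd5 A \<and> (\<forall>i j. A $ i $ j \<ge> 0)}"

definition diag5 :: "(5 \<Rightarrow> real) \<Rightarrow> mat5" where
  "diag5 d = (\<chi> i j. if i = j then d i else 0)"

definition Horn :: mat5 where
  "Horn = vector [vector [ 1, -1,  1,  1, -1],
                  vector [-1,  1, -1,  1,  1],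
                  vector [ 1, -1,  1, -1,  1],
                  vector [ 1,  1, -1,  1, -1],
                  vector [-1,  1,  1, -1,  1]]"

definition W5 :: "mat5 set" where
  "W5 = {X. (\<forall>i j. X $ i $ j \<ge> 0) \<and>
            X $ 1 $ 2 = 0 \<and> X $ 1 $ 3 = 0 \<and>
            X $ 2 $ 3 = 0 \<and> X $ 2 $ 4 = 0 \<and>
            X $ 3 $ 4 = 0 \<and> X $ 3 $ 5 = 0 \<and>
            X $ 4 $ 1 = 0 \<and> X $ 4 $ 5 = 0 \<and>
            X $ 5 $ 1 = 0 \<and> X $ 5 $ 2 = 0}"

definition HornB :: "real \<Rightarrow> real \<Rightarrow> real \<Rightarrow> real \<Rightarrow> real \<Rightarrow> mat5" where
  "HornB y1 y2 y3 y4 y5 =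
     vector [vector [1,      0,      0,      y4,     y5 + 1],
             vector [y1 + 1, 1,      0,      0,      y5],
             vector [y1,     y2 + 1, 1,      0,      0],
             vector [0,      y2,     y3 + 1, 1,      0],
             vector [0,      0,      y3,     y4 + 1, 1]]"

definition Z_Horn :: "mat5 set" where
  "Z_Horn = {diag5 d ** (HornB y1 y2 y3 y4 y5 ** diag5 z) | d y1 y2 y3 y4 y5 z.
               (\<forall>i. d i > 0) \<and> (\<forall>i. z i > 0) \<and>
               y1 > 0 \<and> y2 > 0 \<and> y3 > 0 \<and> y4 > 0 \<and> y5 > 0}"

definition V_Horn :: "mat5 set" where
  "V_Horn = {A. A \<in> (top_of_set Sym5) frontier_of CP5 \<and>
                A \<in> (top_of_set Sym5) interior_of DNN5 \<and>
                (\<exists>d. (\<forall>i. d i > 0) \<and> inner5 A (diag5 d ** Horn ** diag5 d) = 0)}"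

definition phi5 :: "mat5 \<Rightarrow> mat5" where
  "phi5 X = X ** transpose X"

end

theory Submission
  imports Defs
begin

text \<open>The Horn form \<open>x\<^sup>T H x\<close> is copositive, and its zeros in the nonnegative orthant are the
  vectors supported on a cyclic interval \<open>{s, s+1, s+2}\<close> whose middle entry is the sum of the
  outer two. A completely positive \<open>A = \<Sum> b\<^sub>l b\<^sub>l\<^sup>T\<close> is orthogonal to \<open>DHD\<close> iff every \<open>D b\<^sub>l\<close> is
  such a zero. A sum \<open>M\<close> of outer products of such zeros is determined by its entries at distance
  one and two from the diagonal, and these entries satisfy a cyclic system of Cauchy--Schwarz
  inequalities; a monotone fixed-point iteration turns them into parameters \<open>y, a > 0\<close> with
  \<open>M = \<phi>(HornB(y) diag(a))\<close>. Conversely, for \<open>X \<in> Z_Horn\<close> the columns of \<open>D\<^sup>-\<^sup>1 X\<close> are such zeros,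
  so \<open>XX\<^sup>T\<close> is completely positive and orthogonal to a copositive matrix with positive diagonal,
  hence on the boundary of \<open>CP5\<close>; and \<open>X\<close> is invertible with overlapping column supports, so
  \<open>XX\<^sup>T\<close> is positive definite with positive entries, hence interior to \<open>DNN5\<close>.\<close>

lemma exhaust_5: fixes i :: 5 shows "i = 1 \<or> i = 2 \<or> i = 3 \<or> i = 4 \<or> i = 5"
proof (induct i)
  case (of_int z)
  then have "z = 0 \<or> z = 1 \<or> z = 2 \<or> z = 3 \<or> z = 4" by fastforce
  then show ?case by auto
qed

lemma UNIV_5: "(UNIV :: 5 set) = {1, 2, 3, 4, 5}"
  using exhaust_5 by auto

lemma sum_UNIV_5: "sum f (UNIV :: 5 set) = f 1 + f 2 + f 3 + f 4 + f 5"
  unfolding UNIV_5 by (simp add: ac_simps)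

lemma ex_5: "(\<exists>i::5. P i) \<longleftrightarrow> P 1 \<or> P 2 \<or> P 3 \<or> P 4 \<or> P 5"
  by (metis exhaust_5)

lemma vector_5_nth [simp]:
  "(vector [a, b, c, d, e] :: 'a::zero^5) $ 1 = a"
  "(vector [a, b, c, d, e] :: 'a::zero^5) $ 2 = b"
  "(vector [a, b, c, d, e] :: 'a::zero^5) $ 3 = c"
  "(vector [a, b, c, d, e] :: 'a::zero^5) $ 4 = d"
  "(vector [a, b, c, d, e] :: 'a::zero^5) $ 5 = e"
  unfolding vector_def by simp_all

lemma numeral_5_reduce [simp]:
  "(6::5) = 1" "(7::5) = 2" "(8::5) = 3" "(9::5) = 4" "(10::5) = 5"
  "(11::5) = 1" "(12::5) = 2" "(13::5) = 3" "(14::5) = 4" "(15::5) = 5"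
  by simp_all

lemma add_5_cycle [simp]:
  fixes i :: 5 shows "i + 4 + 1 = i" "i + 3 + 2 = i" "i + 4 + 2 = i + 1"
  using exhaust_5[of i] by (elim disjE; simp)+

lemma index_5_cases:
  fixes i j :: 5 shows "j = i \<or> j = i + 1 \<or> j = i + 2 \<or> i = j + 2 \<or> i = j + 1"
  using exhaust_5[of i] exhaust_5[of j] by (elim disjE) simp_all

subsection \<open>The Horn form and its zeros\<close>

definition horn_form :: "real^5 \<Rightarrow> real" where
  "horn_form x = x \<bullet> (Horn *v x)"

definition horn_poly :: "real \<Rightarrow> real \<Rightarrow> real \<Rightarrow> real \<Rightarrow> real \<Rightarrow> real" where
  "horn_poly x1 x2 x3 x4 x5 = x1\<^sup>2 + x2\<^sup>2 + x3\<^sup>2 + x4\<^sup>2 + x5\<^sup>2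
     - 2*x1*x2 + 2*x1*x3 + 2*x1*x4 - 2*x1*x5 - 2*x2*x3 + 2*x2*x4 + 2*x2*x5
     - 2*x3*x4 + 2*x3*x5 - 2*x4*x5"

lemma horn_form_eq_horn_poly: "horn_form x = horn_poly (x$1) (x$2) (x$3) (x$4) (x$5)"
  unfolding horn_form_def horn_poly_def Horn_def inner_vec_def matrix_vector_mult_def sum_UNIV_5
  by (simp add: algebra_simps power2_eq_square)

text \<open>Two certificates of copositivity: on the orthant, the first has nonnegative summands
  when \<open>x4 \<le> x5\<close>, the second when \<open>x5 \<le> x4\<close>.\<close>

lemma horn_poly_sos_le:
  "horn_poly x1 x2 x3 x4 x5 = (x1 - x2 + x3 + x4 - x5)\<^sup>2 + 4*x2*x4 + 4*x3*(x5 - x4)"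
  unfolding horn_poly_def by (simp add: algebra_simps power2_eq_square)

lemma horn_poly_sos_ge:
  "horn_poly x1 x2 x3 x4 x5 = (x1 - x2 + x3 - x4 + x5)\<^sup>2 + 4*x2*x5 + 4*x1*(x4 - x5)"
  unfolding horn_poly_def by (simp add: algebra_simps power2_eq_square)

lemma horn_poly_nonneg:
  assumes "x1 \<ge> 0" "x2 \<ge> 0" "x3 \<ge> 0" "x4 \<ge> 0" "x5 \<ge> 0"
  shows "horn_poly x1 x2 x3 x4 x5 \<ge> 0"
proof (cases "x4 \<le> x5")
  case True
  then show ?thesis unfolding horn_poly_sos_le using assms by (intro add_nonneg_nonneg) auto
next
  case False
  then show ?thesis unfolding horn_poly_sos_ge using assms by (intro add_nonneg_nonneg) auto
qed

lemma horn_poly_eq_0_cases: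
  assumes "x1 \<ge> 0" "x2 \<ge> 0" "x3 \<ge> 0" "x4 \<ge> 0" "x5 \<ge> 0" "horn_poly x1 x2 x3 x4 x5 = 0"
  shows "(x4 = 0 \<and> x5 = 0 \<and> x2 = x1 + x3) \<or> (x5 = 0 \<and> x1 = 0 \<and> x3 = x2 + x4) \<or>
         (x1 = 0 \<and> x2 = 0 \<and> x4 = x3 + x5) \<or> (x2 = 0 \<and> x3 = 0 \<and> x5 = x4 + x1) \<or>
         (x3 = 0 \<and> x4 = 0 \<and> x1 = x5 + x2)"
proof (cases "x4 \<le> x5")
  case True
  let ?a = "(x1 - x2 + x3 + x4 - x5)\<^sup>2" and ?b = "4*x2*x4" and ?c = "4*x3*(x5 - x4)"
  have "?a \<ge> 0" "?b \<ge> 0" "?c \<ge> 0" using assms True by auto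
  moreover have "?a + ?b + ?c = 0" using assms(6) unfolding horn_poly_sos_le .
  ultimately have "?a = 0" "?b = 0" "?c = 0" by linarith+
  then have "x1 - x2 + x3 + x4 - x5 = 0" "x2 = 0 \<or> x4 = 0" "x3 = 0 \<or> x5 = x4" by auto
  then show ?thesis using assms by (smt (verit))
next
  case False
  let ?a = "(x1 - x2 + x3 - x4 + x5)\<^sup>2" and ?b = "4*x2*x5" and ?c = "4*x1*(x4 - x5)"
  have "?a \<ge> 0" "?b \<ge> 0" "?c \<ge> 0" using assms False by auto
  moreover have "?a + ?b + ?c = 0" using assms(6) unfolding horn_poly_sos_ge .
  ultimately have "?a = 0" "?b = 0" "?c = 0" by linarith+
  then have "x1 - x2 + x3 - x4 + x5 = 0" "x2 = 0 \<or> x5 = 0" "x1 = 0" using False by auto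
  then show ?thesis by (smt (verit))
qed

definition horn_zero_pattern :: "5 \<Rightarrow> real^5 \<Rightarrow> bool" where
  "horn_zero_pattern s x \<longleftrightarrow> x$(s+3) = 0 \<and> x$(s+4) = 0 \<and> x$(s+1) = x$s + x$(s+2)"

lemma horn_form_nonneg: "(\<And>i. x$i \<ge> 0) \<Longrightarrow> horn_form x \<ge> 0"
  unfolding horn_form_eq_horn_poly by (rule horn_poly_nonneg) auto

lemma horn_form_zero_pattern: "horn_zero_pattern s x \<Longrightarrow> horn_form x = 0"
  using exhaust_5[of s] unfolding horn_zero_pattern_def horn_form_eq_horn_poly
  by (elim disjE) (simp_all add: horn_poly_def power2_eq_square algebra_simps)

lemma horn_form_eq_0_imp_pattern:
  assumes "\<And>i. x$i \<ge> 0" "horn_form x = 0"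
  obtains s where "horn_zero_pattern s x"
proof -
  have "(x$4 = 0 \<and> x$5 = 0 \<and> x$2 = x$1 + x$3) \<or> (x$5 = 0 \<and> x$1 = 0 \<and> x$3 = x$2 + x$4) \<or>
      (x$1 = 0 \<and> x$2 = 0 \<and> x$4 = x$3 + x$5) \<or> (x$2 = 0 \<and> x$3 = 0 \<and> x$5 = x$4 + x$1) \<or>
      (x$3 = 0 \<and> x$4 = 0 \<and> x$1 = x$5 + x$2)"
    using assms by (intro horn_poly_eq_0_cases) (auto simp: horn_form_eq_horn_poly)
  then have "\<exists>s. horn_zero_pattern s x"
    unfolding horn_zero_pattern_def ex_5 by (elim disjE) (simp_all add: ac_simps)
  then show thesis using that by blast
qed

lemma horn_zero_pattern_prod_2:
  "horn_zero_pattern s x \<Longrightarrow> x$i * x$(i+2) = (if s = i then x$s * x$(s+2) else 0)"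
  using exhaust_5[of s] exhaust_5[of i] unfolding horn_zero_pattern_def
  by (elim disjE) simp_all

lemma horn_zero_pattern_prod_1:
  "horn_zero_pattern s x \<Longrightarrow> x$i * x$(i+1) - x$i * x$(i+2) - x$(i+4) * x$(i+1) =
    (if s = i then (x$s)\<^sup>2 else 0) + (if s = i+4 then (x$(s+2))\<^sup>2 else 0)"
  using exhaust_5[of s] exhaust_5[of i] unfolding horn_zero_pattern_def
  by (elim disjE) (simp_all add: algebra_simps power2_eq_square)

lemma horn_zero_pattern_square:
  "horn_zero_pattern s x \<Longrightarrow>
    x$i * x$i = x$i * x$(i+1) + x$(i+4) * x$i - x$i * x$(i+2) - x$(i+3) * x$i"
  using exhaust_5[of s] exhaust_5[of i] unfolding horn_zero_pattern_def
  by (elim disjE) (simp_all add: algebra_simps)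

definition outer :: "real^'n \<Rightarrow> real^'n^'n" where
  "outer b = (\<chi> i j. b$i * b$j)"

lemma outer_0 [simp]: "outer 0 = 0"
  unfolding outer_def by (simp add: vec_eq_iff)

lemma outer_scaleR: "outer (c *\<^sub>R b) = c\<^sup>2 *\<^sub>R outer b"
  unfolding outer_def by (simp add: vec_eq_iff power2_eq_square mult_ac)

lemma sum_outer_nth: "(\<Sum>l\<in>L. outer (x l)) $ i $ j = (\<Sum>l\<in>L. x l $ i * x l $ j)"
  unfolding outer_def by simp

lemma sum_outer_sym: "(\<Sum>l\<in>L. outer (x l)) $ i $ j = (\<Sum>l\<in>L. outer (x l)) $ j $ i"
  unfolding sum_outer_nth by (simp add: mult.commute)

lemma mult_transpose_eq_sum_outer:
  fixes X :: "real^'k^'n"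
  shows "X ** transpose X = (\<Sum>k\<in>UNIV. outer (column k X))"
  unfolding outer_def column_def matrix_matrix_mult_def transpose_def by (simp add: vec_eq_iff)

lemma inner_mult_transpose:
  fixes X :: "real^'k^'n"
  shows "x \<bullet> ((X ** transpose X) *v x) = (norm (transpose X *v x))\<^sup>2"
  by (simp add: power2_norm_eq_inner dot_lmul_matrix matrix_vector_mul_assoc[symmetric])

lemma mult_transpose_coercive:
  fixes X :: "real^'n^'n"
  assumes "\<And>x. transpose X *v x = 0 \<Longrightarrow> x = 0"
  shows "\<exists>c>0. \<forall>x. c * (norm x)\<^sup>2 \<le> x \<bullet> ((X ** transpose X) *v x)"
proof -
  have lin: "linear ((*v) (transpose X))" by simp
  have "inj ((*v) (transpose X))"
    using assms unfolding linear_injective_0[OF lin] by blast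
  then obtain B where B: "B > 0" "\<And>x. B * norm x \<le> norm (transpose X *v x)"
    using linear_inj_bounded_below_pos[OF lin] by blast
  have "B\<^sup>2 * (norm x)\<^sup>2 \<le> x \<bullet> ((X ** transpose X) *v x)" for x
    unfolding inner_mult_transpose power_mult_distrib[symmetric]
    using B by (intro power_mono) auto
  then show ?thesis using B(1) by (intro exI[of _ "B\<^sup>2"]) auto
qed

lemma entry_le_norm: "\<bar>(M::real^'n^'m) $ i $ j\<bar> \<le> norm M"
  using component_le_norm_cart[of "M $ i" j] Finite_Cartesian_Product.norm_nth_le[of M i] by linarith

lemma quadratic_form_bound:
  fixes M :: "real^'n^'n"
  shows "\<bar>x \<bullet> (M *v x)\<bar> \<le> (real CARD('n))\<^sup>2 * norm M * (norm x)\<^sup>2"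
proof -
  have "\<bar>x \<bullet> (M *v x)\<bar> \<le> norm x * norm (M *v x)" by (rule Cauchy_Schwarz_ineq2)
  also have "norm (M *v x) \<le> onorm ((*v) M) * norm x" by (rule onorm) simp
  also have "onorm ((*v) M) \<le> real CARD('n) * real CARD('n) * norm M"
    by (rule onorm_le_matrix_component) (rule entry_le_norm)
  finally have "\<bar>x \<bullet> (M *v x)\<bar> \<le> norm x * (real CARD('n) * real CARD('n) * norm M * norm x)"
    by (simp add: mult_left_mono mult_right_mono)
  then show ?thesis by (simp add: power2_eq_square mult_ac)
qed

lemma diag5_mult_nth: "(diag5 d ** A) $ i $ j = d i * A $ i $ j"
proof -
  have "(diag5 d ** A) $ i $ j = (\<Sum>k\<in>UNIV. (if i = k then d i else 0) * A $ k $ j)"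
    unfolding diag5_def matrix_matrix_mult_def by simp
  also have "\<dots> = (\<Sum>k\<in>UNIV. if k = i then d i * A $ i $ j else 0)"
    by (rule sum.cong) auto
  finally show ?thesis by simp
qed

lemma mult_diag5_nth: "(A ** diag5 d) $ i $ j = A $ i $ j * d j"
proof -
  have "(A ** diag5 d) $ i $ j = (\<Sum>k\<in>UNIV. A $ i $ k * (if k = j then d k else 0))"
    unfolding diag5_def matrix_matrix_mult_def by simp
  also have "\<dots> = (\<Sum>k\<in>UNIV. if k = j then A $ i $ j * d j else 0)"
    by (rule sum.cong) auto
  finally show ?thesis by simp
qed

lemma diag5_mult_vec_eq_0:
  assumes "\<And>i. d i \<noteq> 0" shows "diag5 d *v v = 0 \<longleftrightarrow> v = 0"
proof -
  have "(diag5 d *v v) $ i = (\<Sum>j\<in>UNIV. (if i = j then d i else 0) * v $ j)" for i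
    unfolding diag5_def matrix_vector_mult_def by simp
  also have "\<dots> i = (\<Sum>j\<in>UNIV. if j = i then d i * v $ i else 0)" for i
    by (rule sum.cong) auto
  finally show ?thesis using assms by (simp add: vec_eq_iff)
qed

lemma transpose_diag5 [simp]: "transpose (diag5 d) = diag5 d"
  unfolding diag5_def transpose_def by (simp add: vec_eq_iff)

lemma phi5_diag5_mult: "phi5 (diag5 d ** X) = diag5 d ** phi5 X ** diag5 d"
  unfolding phi5_def by (simp add: matrix_transpose_mul matrix_mul_assoc)

lemma phi5_in_Sym5: "phi5 X \<in> Sym5"
  unfolding phi5_def Sym5_def by (simp add: matrix_transpose_mul)

lemma inner5_eq_inner: "inner5 A B = A \<bullet> B"
proof -
  have "inner5 A B = (\<Sum>i\<in>UNIV. \<Sum>j\<in>UNIV. A$i$j * B$i$j)"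
    unfolding inner5_def trace_def matrix_matrix_mult_def transpose_def
    by simp (rule sum.swap)
  then show ?thesis by (simp add: inner_vec_def)
qed

lemma inner5_outer_diag_Horn:
  "inner5 (outer b) (diag5 e ** Horn ** diag5 e) = horn_form (\<chi> i. e i * b$i)"
proof -
  have "horn_form (\<chi> i. e i * b$i) = (\<Sum>i\<in>UNIV. \<Sum>j\<in>UNIV. (e i * b$i) * (Horn$i$j * (e j * b$j)))"
    unfolding horn_form_def inner_vec_def matrix_vector_mult_def by (simp add: sum_distrib_left)
  also have "\<dots> = (\<Sum>i\<in>UNIV. \<Sum>j\<in>UNIV. outer b $i$j * (diag5 e ** Horn ** diag5 e)$i$j)"
    unfolding diag5_mult_nth mult_diag5_nth outer_def by (intro sum.cong refl) (simp add: mult_ac)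
  finally show ?thesis unfolding inner5_eq_inner by (simp add: inner_vec_def)
qed

lemma inner5_sum_outer_diag_Horn:
  "inner5 (\<Sum>l\<in>L. outer (b l)) (diag5 e ** Horn ** diag5 e) = (\<Sum>l\<in>L. horn_form (\<chi> i. e i * b l $ i))"
  unfolding inner5_eq_inner inner_sum_left inner5_outer_diag_Horn[unfolded inner5_eq_inner] ..

lemma Sym5_iff: "A \<in> Sym5 \<longleftrightarrow> (\<forall>i j. A$i$j = A$j$i)"
  unfolding Sym5_def transpose_def by (auto simp: vec_eq_iff)

lemma subspace_Sym5: "subspace Sym5"
  unfolding subspace_def by (auto simp: Sym5_iff)

subsection \<open>The completely positive cone\<close>

lemma CP5_iff_sum_outer:
  "A \<in> CP5 \<longleftrightarrow> (\<exists>(k::nat) b. (\<forall>l<k. \<forall>i. 0 \<le> b l $ i) \<and> A = (\<Sum>l<k. outer (b l)))"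
proof -
  have "(\<chi> i j. \<Sum>l<k. b l $ i * b l $ j) = (\<Sum>l<k. outer (b l))" for k and b :: "nat \<Rightarrow> real^5"
    unfolding outer_def by (simp add: vec_eq_iff)
  then show ?thesis unfolding CP5_def by simp
qed

lemma outer_in_CP5: "(\<And>i. 0 \<le> b $ i) \<Longrightarrow> outer b \<in> CP5"
  unfolding CP5_iff_sum_outer by (rule exI[of _ 1], rule exI[of _ "\<lambda>_. b"]) simp

lemma CP5_add:
  assumes "A \<in> CP5" "B \<in> CP5" shows "A + B \<in> CP5"
proof -
  obtain k :: nat and b where b: "\<forall>l<k. \<forall>i. 0 \<le> b l $ i" "A = (\<Sum>l<k. outer (b l))"
    using assms(1) CP5_iff_sum_outer by blast
  obtain k' :: nat and b' where b': "\<forall>l<k'. \<forall>i. 0 \<le> b' l $ i" "B = (\<Sum>l<k'. outer (b' l))"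
    using assms(2) CP5_iff_sum_outer by blast
  define c where "c l = (if l < k then b l else b' (l - k))" for l
  have "(\<Sum>l<k + k'. outer (c l)) = (\<Sum>l<k. outer (c l)) + (\<Sum>l<k'. outer (c (k + l)))"
    by (induct k') (simp_all add: add.assoc)
  then have "A + B = (\<Sum>l<k + k'. outer (c l))"
    using b b' by (simp add: c_def)
  moreover have "\<forall>l<k + k'. \<forall>i. 0 \<le> c l $ i" using b b' unfolding c_def by auto
  ultimately show ?thesis unfolding CP5_iff_sum_outer by blast
qed

lemma CP5_scaleR:
  assumes "A \<in> CP5" "0 \<le> c" shows "c *\<^sub>R A \<in> CP5"
proof -
  obtain k :: nat and b where b: "\<forall>l<k. \<forall>i. 0 \<le> b l $ i" "A = (\<Sum>l<k. outer (b l))"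
    using assms(1) CP5_iff_sum_outer by blast
  have "c *\<^sub>R A = (\<Sum>l<k. outer (sqrt c *\<^sub>R b l))"
    unfolding b(2) scaleR_sum_right outer_scaleR using assms(2) by simp
  moreover have "\<forall>l<k. \<forall>i. 0 \<le> (sqrt c *\<^sub>R b l) $ i" using b(1) assms(2) by simp
  ultimately show ?thesis unfolding CP5_iff_sum_outer by (intro exI[of _ k] exI[of _ "\<lambda>l. sqrt c *\<^sub>R b l"]) simp
qed

lemma convex_cone_CP5: "convex_cone CP5"
proof -
  have "0 \<in> CP5" unfolding CP5_iff_sum_outer by (rule exI[of _ 0]) simp
  then show ?thesis unfolding convex_cone_iff using CP5_add CP5_scaleR by blast
qed

lemma sum_in_CP5: "(\<And>k. k \<in> K \<Longrightarrow> f k \<in> CP5) \<Longrightarrow> sum f K \<in> CP5"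
proof (induction K rule: infinite_finite_induct)
  case (infinite K)
  then show ?case using convex_cone_CP5 by (simp add: convex_cone_contains_0)
next
  case empty
  then show ?case using convex_cone_CP5 by (simp add: convex_cone_contains_0)
qed (simp add: CP5_add)

lemma CP5_subset_Sym5: "CP5 \<subseteq> Sym5"
proof
  fix A assume "A \<in> CP5"
  then obtain k :: nat and b where "A = (\<Sum>l<k. outer (b l))" using CP5_iff_sum_outer by blast
  then show "A \<in> Sym5" unfolding Sym5_iff using sum_outer_sym by blast
qed

lemma mult_transpose_in_CP5:
  fixes X :: mat5
  assumes "\<And>i j. 0 \<le> X $ i $ j"
  shows "X ** transpose X \<in> CP5"
  unfolding mult_transpose_eq_sum_outer
  by (intro sum_in_CP5 outer_in_CP5) (simp add: column_def assms)

lemma CP5_inner_diag_Horn_nonneg: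
  assumes "A \<in> CP5" "\<And>i. 0 \<le> e i"
  shows "0 \<le> inner5 A (diag5 e ** Horn ** diag5 e)"
proof -
  obtain k :: nat and b where b: "\<forall>l<k. \<forall>i. 0 \<le> b l $ i" "A = (\<Sum>l<k. outer (b l))"
    using assms(1) CP5_iff_sum_outer by blast
  show ?thesis unfolding b(2) inner5_sum_outer_diag_Horn
    by (intro sum_nonneg horn_form_nonneg) (use b(1) assms(2) in simp)
qed

text \<open>\<open>CP5\<close> is the cone over the convex hull of a compact set of trace-one matrices, and such
  a cone is closed.\<close>

definition CP5_generators :: "mat5 set" where
  "CP5_generators = outer ` {b. (\<forall>i. 0 \<le> b$i) \<and> norm b = 1}"

lemma compact_CP5_generators: "compact CP5_generators"
proof -
  have "{b::real^5. (\<forall>i. 0 \<le> b$i) \<and> norm b = 1} = {x. \<forall>i. 0 \<le> x$i} \<inter> sphere 0 1"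
    by auto
  then have "compact {b::real^5. (\<forall>i. 0 \<le> b$i) \<and> norm b = 1}"
    using closed_Int_compact[OF closed_positive_orthant compact_sphere] by simp
  moreover have "continuous_on UNIV (outer :: real^5 \<Rightarrow> mat5)"
    unfolding outer_def
    by (intro continuous_on_vec_lambda continuous_on_mult continuous_on_component continuous_on_id)
  ultimately show ?thesis unfolding CP5_generators_def
    using compact_continuous_image continuous_on_subset by blast
qed

lemma zero_notin_convex_hull_CP5_generators: "0 \<notin> convex hull CP5_generators"
proof -
  have "mat 1 \<bullet> M = 1" if "M \<in> CP5_generators" for M
  proof -
    obtain b where b: "norm b = 1" "M = outer b"
      using \<open>M \<in> CP5_generators\<close> unfolding CP5_generators_def by auto
    have "mat 1 \<bullet> M = (\<Sum>i\<in>UNIV. \<Sum>j\<in>UNIV. if j = i then b$i * b$i else 0)"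
      unfolding b inner_vec_def mat_def outer_def by (intro sum.cong) auto
    also have "\<dots> = b \<bullet> b" unfolding inner_vec_def by simp
    finally show ?thesis using b by (simp add: norm_eq_sqrt_inner)
  qed
  then have "convex hull CP5_generators \<subseteq> {M. mat 1 \<bullet> M = 1}"
    by (intro hull_minimal) (auto simp: convex_hyperplane)
  then show ?thesis by auto
qed

lemma CP5_eq_convex_cone_hull: "CP5 = convex_cone hull CP5_generators"
proof
  show "convex_cone hull CP5_generators \<subseteq> CP5"
  proof (rule hull_minimal)
    show "CP5_generators \<subseteq> CP5" unfolding CP5_generators_def by (auto intro: outer_in_CP5)
  qed (rule convex_cone_CP5)
  have outer_in_hull: "outer b \<in> convex_cone hull CP5_generators" if "\<forall>i. 0 \<le> b $ i" for b
  proof (cases "b = 0")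
    case True
    then show ?thesis by (simp add: convex_cone_hull_contains_0)
  next
    case False
    then have "outer ((1 / norm b) *\<^sub>R b) \<in> CP5_generators"
      using that unfolding CP5_generators_def by (intro imageI) simp
    moreover have "outer b = (norm b)\<^sup>2 *\<^sub>R outer ((1 / norm b) *\<^sub>R b)"
      using False by (simp add: outer_scaleR power_divide)
    ultimately show ?thesis by (simp add: convex_cone_hull_mul hull_inc)
  qed
  show "CP5 \<subseteq> convex_cone hull CP5_generators"
  proof
    fix A assume "A \<in> CP5"
    then obtain k :: nat and b where b: "\<forall>l<k. \<forall>i. 0 \<le> b l $ i" "A = (\<Sum>l<k. outer (b l))"
      using CP5_iff_sum_outer by blast
    have "(\<Sum>l<n. outer (b l)) \<in> convex_cone hull CP5_generators" if "n \<le> k" for n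
      using that
    proof (induct n)
      case 0
      then show ?case by (simp add: convex_cone_hull_contains_0)
    next
      case (Suc n)
      then show ?case using b(1) by (simp add: convex_cone_hull_add outer_in_hull)
    qed
    then show "A \<in> convex_cone hull CP5_generators" using b(2) by simp
  qed
qed

lemma closed_CP5: "closed CP5"
proof -
  have "0 \<le> axis 1 (1::real) $ i" for i :: 5 by (simp add: axis_def)
  then have "outer (axis 1 1) \<in> CP5_generators"
    unfolding CP5_generators_def by (intro imageI) simp
  then have "CP5 = conic hull (convex hull CP5_generators)"
    unfolding CP5_eq_convex_cone_hull by (intro convex_cone_hull_separate_nonempty) blast
  then show ?thesis
    using compact_CP5_generators zero_notin_convex_hull_CP5_generators
    by (metis closed_conic_hull compact_convex_hull)
qed

subsection \<open>Interior and boundary relative to \<open>Sym5\<close>\<close>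

lemma interior_of_subspace_perturb:
  fixes U S :: "'a::real_normed_vector set"
  assumes "subspace U" "A \<in> (top_of_set U) interior_of S" "E \<in> U"
  obtains \<delta> where "\<delta> > 0" "A - \<delta> *\<^sub>R E \<in> S"
proof -
  obtain T where T: "openin (top_of_set U) T" "A \<in> T" "T \<subseteq> S"
    using assms(2) unfolding interior_of_def by blast
  obtain V where V: "open V" "T = U \<inter> V" using T(1) openin_open by blast
  have "A \<in> V" "A \<in> U" using T(2) V(2) by auto
  then obtain e where e: "e > 0" "ball A e \<subseteq> V" using V(1) open_contains_ball by blast
  have "norm E + 1 > 0" by (simp add: add_nonneg_pos)
  define \<delta> where "\<delta> = e / (2 * (norm E + 1))"
  have "\<delta> > 0" unfolding \<delta>_def using e(1) \<open>norm E + 1 > 0\<close> by simp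
  have "\<delta> * norm E < e"
  proof -
    have "\<delta> * norm E \<le> \<delta> * (norm E + 1)" using \<open>\<delta> > 0\<close> by simp
    also have "\<dots> = e / 2" unfolding \<delta>_def using \<open>norm E + 1 > 0\<close> by (simp add: field_simps)
    finally show ?thesis using e(1) by simp
  qed
  then have "A - \<delta> *\<^sub>R E \<in> V" using e(2) \<open>\<delta> > 0\<close> by (auto simp: dist_norm)
  moreover have "A - \<delta> *\<^sub>R E \<in> U"
    using \<open>A \<in> U\<close> assms(1,3) by (simp add: subspace_diff subspace_scale)
  ultimately show thesis using V(2) T(3) \<open>\<delta> > 0\<close> that by blast
qed

lemma DNN5_interior_of_pos:
  assumes "A \<in> (top_of_set Sym5) interior_of DNN5"
  shows "A $ i $ j > 0"
proof -
  define E :: mat5 where "E = (\<chi> p q. if (p = i \<and> q = j) \<or> (p = j \<and> q = i) then 1 else 0)"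
  have "E \<in> Sym5" unfolding Sym5_iff E_def by auto
  then obtain \<delta> where "\<delta> > 0" "A - \<delta> *\<^sub>R E \<in> DNN5"
    using interior_of_subspace_perturb[OF subspace_Sym5 assms] by blast
  then have "0 \<le> (A - \<delta> *\<^sub>R E) $ i $ j" unfolding DNN5_def by blast
  then have "0 \<le> A $ i $ j - \<delta>" unfolding E_def by simp
  then show ?thesis using \<open>\<delta> > 0\<close> by simp
qed

lemma DNN5_interior_ofI:
  assumes "A \<in> Sym5" "\<And>i j. A $ i $ j > 0" "c > 0" "\<And>x. c * (norm x)\<^sup>2 \<le> x \<bullet> (A *v x)"
  shows "A \<in> (top_of_set Sym5) interior_of DNN5"
proof -
  define a where "a = Min (range (\<lambda>(i, j). A $ i $ j))"
  have "a > 0" unfolding a_def using assms(2) by (subst Min_gr_iff) auto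
  have a_le: "a \<le> A $ i $ j" for i j unfolding a_def by (rule Min_le) auto
  define r where "r = min (c / 25) a"
  have "r > 0" unfolding r_def using assms(3) \<open>a > 0\<close> by simp
  have "Sym5 \<inter> ball A r \<subseteq> DNN5"
  proof
    fix B assume "B \<in> Sym5 \<inter> ball A r"
    then have B: "B \<in> Sym5" "norm (B - A) < r" by (auto simp: dist_norm norm_minus_commute)
    have "B $ i $ j \<ge> 0" for i j
      using entry_le_norm[of "B - A" i j] B(2) a_le[of i j] unfolding r_def by (simp add: abs_le_iff)
    moreover have "x \<bullet> (B *v x) \<ge> 0" for x
    proof -
      have "\<bar>x \<bullet> ((B - A) *v x)\<bar> \<le> 25 * norm (B - A) * (norm x)\<^sup>2"
        using quadratic_form_bound[of x "B - A"] by simp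
      also have "\<dots> \<le> c * (norm x)\<^sup>2"
        using B(2) unfolding r_def by (intro mult_right_mono) auto
      finally show ?thesis
        using assms(4)[of x] by (simp add: matrix_vector_mult_diff_rdistrib inner_diff_right)
    qed
    ultimately show "B \<in> DNN5" unfolding DNN5_def psd5_def using B(1) by simp
  qed
  moreover have "openin (top_of_set Sym5) (Sym5 \<inter> ball A r)" by (rule openin_open_Int) simp
  moreover have "A \<in> Sym5 \<inter> ball A r" using assms(1) \<open>r > 0\<close> by simp
  ultimately show ?thesis unfolding interior_of_def by blast
qed

lemma CP5_frontier_of_subset: "(top_of_set Sym5) frontier_of CP5 \<subseteq> CP5"
proof -
  have "(top_of_set Sym5) frontier_of CP5 \<subseteq> euclidean closure_of CP5"
    unfolding frontier_of_def using closure_of_subtopology_subset[of euclidean Sym5 CP5] by auto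
  then show ?thesis using closed_CP5 by (simp add: closure_closed)
qed

text \<open>Moving from \<open>A\<close> against the copositive \<open>G = DHD \<noteq> 0\<close> would make the inner product with \<open>G\<close>
  negative.\<close>

lemma CP5_frontier_ofI:
  assumes "A \<in> CP5" "\<And>i. e i > 0" "inner5 A (diag5 e ** Horn ** diag5 e) = 0"
  shows "A \<in> (top_of_set Sym5) frontier_of CP5"
proof -
  let ?G = "diag5 e ** Horn ** diag5 e"
  have "A \<notin> (top_of_set Sym5) interior_of CP5"
  proof
    assume "A \<in> (top_of_set Sym5) interior_of CP5"
    moreover have "?G \<in> Sym5"
    proof -
      have "Horn $ i $ j = Horn $ j $ i" for i j
        using exhaust_5[of i] exhaust_5[of j] unfolding Horn_def by (elim disjE) simp_all
      then show ?thesis unfolding Sym5_iff diag5_mult_nth mult_diag5_nth by (simp add: mult_ac)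
    qed
    ultimately obtain \<delta> where "\<delta> > 0" "A - \<delta> *\<^sub>R ?G \<in> CP5"
      using interior_of_subspace_perturb[OF subspace_Sym5] by blast
    then have "0 \<le> inner5 (A - \<delta> *\<^sub>R ?G) ?G"
      using assms(2) by (intro CP5_inner_diag_Horn_nonneg) (auto simp: less_imp_le)
    also have "\<dots> = - \<delta> * (?G \<bullet> ?G)"
      using assms(3) unfolding inner5_eq_inner by (simp add: inner_diff_left)
    finally have "?G \<bullet> ?G \<le> 0" using \<open>\<delta> > 0\<close> by (simp add: mult_le_0_iff)
    moreover have "?G \<noteq> 0"
    proof
      assume "?G = 0"
      then have "e 1 * Horn $ 1 $ 1 * e 1 = 0" using diag5_mult_nth mult_diag5_nth by (metis zero_index)
      then show False using assms(2)[of 1] by (simp add: Horn_def)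
    qed
    ultimately show False using inner_gt_zero_iff[of ?G] by linarith
  qed
  moreover have "A \<in> (top_of_set Sym5) closure_of CP5"
    using closure_of_subset[of CP5 "top_of_set Sym5"] CP5_subset_Sym5 assms(1) by auto
  ultimately show ?thesis unfolding frontier_of_def by blast
qed

subsection \<open>The face of \<open>CP5\<close> orthogonal to the Horn matrix\<close>

lemma sum_outer_horn_zeros_nth_2:
  assumes "finite L" "\<And>l. l \<in> L \<Longrightarrow> horn_zero_pattern (s l) (x l)"
  shows "(\<Sum>l\<in>L. outer (x l)) $ i $ (i+2) = (\<Sum>l\<in>{l\<in>L. s l = i}. x l $ i * x l $ (i+2))"
proof -
  have "(\<Sum>l\<in>L. outer (x l)) $ i $ (i+2) = (\<Sum>l\<in>L. if s l = i then x l $ i * x l $ (i+2) else 0)"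
    unfolding sum_outer_nth
  proof (rule sum.cong[OF refl])
    fix l assume "l \<in> L"
    from horn_zero_pattern_prod_2[OF assms(2)[OF this], of i]
    show "x l $ i * x l $ (i+2) = (if s l = i then x l $ i * x l $ (i+2) else 0)"
      by (cases "s l = i") simp_all
  qed
  then show ?thesis using assms(1) by (simp add: sum.inter_filter)
qed

lemma sum_outer_horn_zeros_nth_1:
  assumes "finite L" "\<And>l. l \<in> L \<Longrightarrow> horn_zero_pattern (s l) (x l)"
  defines "S \<equiv> \<Sum>l\<in>L. outer (x l)"
  shows "S $ i $ (i+1) - S $ i $ (i+2) - S $ (i+4) $ (i+1) =
    (\<Sum>l\<in>{l\<in>L. s l = i}. (x l $ i)\<^sup>2) + (\<Sum>l\<in>{l\<in>L. s l = i+4}. (x l $ (i+1))\<^sup>2)"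
proof -
  have "S $ i $ (i+1) - S $ i $ (i+2) - S $ (i+4) $ (i+1) =
      (\<Sum>l\<in>L. x l $ i * x l $ (i+1) - x l $ i * x l $ (i+2) - x l $ (i+4) * x l $ (i+1))"
    unfolding S_def sum_outer_nth by (simp add: sum_subtractf)
  also have "\<dots> = (\<Sum>l\<in>L. (if s l = i then (x l $ i)\<^sup>2 else 0) + (if s l = i+4 then (x l $ (i+1))\<^sup>2 else 0))"
  proof (rule sum.cong[OF refl])
    fix l assume "l \<in> L"
    from horn_zero_pattern_prod_1[OF assms(2)[OF this], of i]
    show "x l $ i * x l $ (i+1) - x l $ i * x l $ (i+2) - x l $ (i+4) * x l $ (i+1) =
        (if s l = i then (x l $ i)\<^sup>2 else 0) + (if s l = i+4 then (x l $ (i+1))\<^sup>2 else 0)"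
      by (cases "s l = i"; cases "s l = i+4") simp_all
  qed
  finally show ?thesis using assms(1) by (simp add: sum.distrib sum.inter_filter)
qed

lemma sum_outer_horn_zeros_diag:
  assumes "\<And>l. l \<in> L \<Longrightarrow> \<exists>s. horn_zero_pattern s (x l)"
  defines "S \<equiv> \<Sum>l\<in>L. outer (x l)"
  shows "S $ i $ i = S $ i $ (i+1) + S $ (i+4) $ i - S $ i $ (i+2) - S $ (i+3) $ i"
proof -
  have "S $ i $ i = (\<Sum>l\<in>L. x l $ i * x l $ (i+1) + x l $ (i+4) * x l $ i
      - x l $ i * x l $ (i+2) - x l $ (i+3) * x l $ i)"
    unfolding S_def sum_outer_nth using assms(1) horn_zero_pattern_square by (intro sum.cong) blast+
  then show ?thesis unfolding S_def sum_outer_nth by (simp add: sum.distrib sum_subtractf)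
qed

lemma horn_face_eqI:
  fixes F G :: mat5
  assumes "F \<in> Sym5" "G \<in> Sym5"
    and "\<And>i. F$i$i = F$i$(i+1) + F$(i+4)$i - F$i$(i+2) - F$(i+3)$i"
    and "\<And>i. G$i$i = G$i$(i+1) + G$(i+4)$i - G$i$(i+2) - G$(i+3)$i"
    and dist_1: "\<And>i. F$i$(i+1) = G$i$(i+1)" and dist_2: "\<And>i. F$i$(i+2) = G$i$(i+2)"
  shows "F = G"
proof -
  have "F$(i+4)$i = G$(i+4)$i" "F$(i+3)$i = G$(i+3)$i" for i
    using dist_1[of "i+4"] dist_2[of "i+3"] by simp_all
  then have diag: "F$i$i = G$i$i" for i using assms(3,4)[of i] dist_1 dist_2 by simp
  have "F$(j+2)$j = G$(j+2)$j" "F$(j+1)$j = G$(j+1)$j" for j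
    using assms(1,2) dist_1[of j] dist_2[of j] unfolding Sym5_iff by metis+
  then have "F$i$j = G$i$j" for i j
    using index_5_cases[of i j] diag dist_1 dist_2 by (elim disjE) simp_all
  then show ?thesis by (simp add: vec_eq_iff)
qed

text \<open>The fixed point is the limit of the iteration \<open>f \<mapsto> m - R\<^sup>2 / f\<close> (composed with \<open>\<sigma>\<close>) started
  at \<open>P\<close>: the map is monotone, \<open>P\<close> is a subsolution by Cauchy--Schwarz \<open>R\<^sup>2 \<le> P Q\<close>, and \<open>m\<close>
  bounds all iterates from above.\<close>

lemma cyclic_fixed_point:
  fixes P Q R m :: "'a \<Rightarrow> real" and \<sigma> :: "'a \<Rightarrow> 'a"
  assumes R: "\<And>i. R i > 0" and P: "\<And>i. P i \<ge> 0" and Q: "\<And>i. Q i \<ge> 0"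
    and CS: "\<And>i. (R i)\<^sup>2 \<le> P i * Q i" and m: "\<And>i. m i = P i + Q (\<sigma> i)"
  obtains t where "\<And>i. t i > 0" "\<And>i. t i + (R (\<sigma> i))\<^sup>2 / t (\<sigma> i) = m i"
proof -
  have P_pos: "P i > 0" for i
    using CS[of i] R[of i] P[of i] Q[of i] by (smt (verit) mult_eq_0_iff zero_less_power)
  have RP: "(R i)\<^sup>2 / P i \<le> Q i" for i
    using CS[of i] P_pos[of i] by (simp add: divide_le_eq mult.commute)
  define T where "T f i = m i - (R (\<sigma> i))\<^sup>2 / f (\<sigma> i)" for f i
  define it where "it n = (T ^^ n) P" for n
  have it_Suc: "it (Suc n) i = m i - (R (\<sigma> i))\<^sup>2 / it n (\<sigma> i)" for n i
    unfolding it_def T_def by simp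
  have ge: "P i \<le> it n i" for n i
  proof (induct n arbitrary: i)
    case 0
    then show ?case by (simp add: it_def)
  next
    case (Suc n)
    have "(R (\<sigma> i))\<^sup>2 / it n (\<sigma> i) \<le> (R (\<sigma> i))\<^sup>2 / P (\<sigma> i)"
      using Suc[of "\<sigma> i"] P_pos[of "\<sigma> i"] by (intro divide_left_mono) auto
    then show ?case using RP[of "\<sigma> i"] m[of i] by (simp add: it_Suc)
  qed
  have it_pos: "0 < it n i" for n i using ge[of i n] P_pos[of i] by linarith
  have inc: "it n i \<le> it (Suc n) i" for n i
  proof (induct n arbitrary: i)
    case 0
    then show ?case using ge[of i 1] by (simp add: it_def)
  next
    case (Suc n)
    have "(R (\<sigma> i))\<^sup>2 / it (Suc n) (\<sigma> i) \<le> (R (\<sigma> i))\<^sup>2 / it n (\<sigma> i)"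
      using Suc[of "\<sigma> i"] it_pos[of n "\<sigma> i"] by (intro divide_left_mono) auto
    then show ?case by (simp add: it_Suc)
  qed
  have bounded: "it n i \<le> m i" for n i
  proof (cases n)
    case 0
    then show ?thesis using m[of i] Q[of "\<sigma> i"] by (simp add: it_def)
  next
    case (Suc n')
    then show ?thesis using it_pos[of n' "\<sigma> i"] by (simp add: it_Suc)
  qed
  have "\<exists>L. (\<lambda>n. it n i) \<longlonglongrightarrow> L" for i
  proof -
    have "incseq (\<lambda>n. it n i)" using inc by (simp add: incseq_SucI)
    moreover have "bdd_above (range (\<lambda>n. it n i))" using bounded by (intro bdd_aboveI[of _ "m i"]) auto
    ultimately show ?thesis using LIMSEQ_incseq_SUP by blast
  qed
  then obtain t where t: "\<And>i. (\<lambda>n. it n i) \<longlonglongrightarrow> t i" by metis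
  have t_pos: "t i > 0" for i
  proof -
    have "P i \<le> t i" using t[of i] ge by (intro LIMSEQ_le_const) auto
    then show ?thesis using P_pos[of i] by linarith
  qed
  have "t i + (R (\<sigma> i))\<^sup>2 / t (\<sigma> i) = m i" for i
  proof -
    have "(\<lambda>n. it (Suc n) i) \<longlonglongrightarrow> t i" using t[of i] by (rule LIMSEQ_Suc)
    moreover have "(\<lambda>n. it (Suc n) i) \<longlonglongrightarrow> m i - (R (\<sigma> i))\<^sup>2 / t (\<sigma> i)"
      unfolding it_Suc using t[of "\<sigma> i"] t_pos[of "\<sigma> i"] by (intro tendsto_intros) auto
    ultimately show ?thesis using LIMSEQ_unique by fastforce
  qed
  then show thesis using t_pos that by blast
qed

definition HornB_of :: "(5 \<Rightarrow> real) \<Rightarrow> mat5" where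
  "HornB_of y = HornB (y 1) (y 2) (y 3) (y 4) (y 5)"

lemma Z_Horn_eq:
  "Z_Horn = {diag5 d ** (HornB_of y ** diag5 z) | d y z.
     (\<forall>i. d i > 0) \<and> (\<forall>i. z i > 0) \<and> (\<forall>i. y i > 0)}"
proof
  show "Z_Horn \<subseteq> {diag5 d ** (HornB_of y ** diag5 z) | d y z.
     (\<forall>i. d i > 0) \<and> (\<forall>i. z i > 0) \<and> (\<forall>i. y i > 0)}"
  proof
    fix X assume "X \<in> Z_Horn"
    then obtain d y1 y2 y3 y4 y5 z where X: "X = diag5 d ** (HornB y1 y2 y3 y4 y5 ** diag5 z)"
      and pos: "\<forall>i. d i > 0" "\<forall>i. z i > 0" "y1 > 0" "y2 > 0" "y3 > 0" "y4 > 0" "y5 > 0"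
      unfolding Z_Horn_def by blast
    define y :: "5 \<Rightarrow> real" where
      "y i = (if i = 1 then y1 else if i = 2 then y2 else if i = 3 then y3 else if i = 4 then y4 else y5)"
      for i
    have "HornB_of y = HornB y1 y2 y3 y4 y5" by (simp add: HornB_of_def y_def)
    then have "X = diag5 d ** (HornB_of y ** diag5 z)" using X by simp
    moreover have "\<forall>i. y i > 0" using exhaust_5 pos by (auto simp: y_def)
    ultimately show "X \<in> {diag5 d ** (HornB_of y ** diag5 z) | d y z.
       (\<forall>i. d i > 0) \<and> (\<forall>i. z i > 0) \<and> (\<forall>i. y i > 0)}"
      using pos by blast
  qed
  show "{diag5 d ** (HornB_of y ** diag5 z) | d y z.
     (\<forall>i. d i > 0) \<and> (\<forall>i. z i > 0) \<and> (\<forall>i. y i > 0)} \<subseteq> Z_Horn"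
    unfolding Z_Horn_def HornB_of_def by blast
qed

lemma HornB_of_column_nth:
  fixes k :: 5
  shows "HornB_of y $ k $ k = 1" "HornB_of y $ (k+1) $ k = y k + 1" "HornB_of y $ (k+2) $ k = y k"
    "HornB_of y $ (k+3) $ k = 0" "HornB_of y $ (k+4) $ k = 0"
  using exhaust_5[of k] by (auto simp: HornB_of_def HornB_def)

lemma horn_zero_pattern_column_HornB_of:
  "horn_zero_pattern k (column k (HornB_of y ** diag5 a))"
  unfolding horn_zero_pattern_def column_def mult_diag5_nth
  by (simp add: HornB_of_column_nth distrib_right)

lemma column_HornB_of_nth:
  "column k (HornB_of y ** diag5 a) $ k = a k" "column k (HornB_of y ** diag5 a) $ (k+2) = y k * a k"
  unfolding column_def mult_diag5_nth by (simp_all add: HornB_of_column_nth)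

lemma HornB_of_nonneg:
  assumes "\<And>i. y i > 0" shows "0 \<le> HornB_of y $ i $ j"
  using exhaust_5[of i] exhaust_5[of j] less_imp_le[OF assms]
  by (elim disjE) (simp_all add: HornB_of_def HornB_def)

lemma HornB_of_common_pos:
  "(\<And>i. y i > 0) \<Longrightarrow> \<exists>k. HornB_of y $ i $ k > 0 \<and> HornB_of y $ j $ k > 0"
  using exhaust_5[of i] exhaust_5[of j] unfolding ex_5
  by (elim disjE) (simp_all add: HornB_of_def HornB_def add_pos_pos)

lemma cyclic_system_eq_0:
  fixes w1 w2 w3 w4 w5 y1 y2 y3 y4 y5 :: real
  assumes "y1 > 0" "y2 > 0" "y3 > 0" "y4 > 0" "y5 > 0"
    and e1: "w1 + (y1+1) * w2 + y1 * w3 = 0"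
    and e2: "w2 + (y2+1) * w3 + y2 * w4 = 0"
    and e3: "w3 + (y3+1) * w4 + y3 * w5 = 0"
    and e4: "w4 + (y4+1) * w5 + y4 * w1 = 0"
    and e5: "w5 + (y5+1) * w1 + y5 * w2 = 0"
  shows "w1 = 0 \<and> w2 = 0 \<and> w3 = 0 \<and> w4 = 0 \<and> w5 = 0"
proof -
  define u1 u2 u3 u4 u5 where "u1 = w1 + w2" "u2 = w2 + w3" "u3 = w3 + w4" "u4 = w4 + w5" "u5 = w5 + w1"
  have f: "u1 = - y1 * u2" "u2 = - y2 * u3" "u3 = - y3 * u4" "u4 = - y4 * u5" "u5 = - y5 * u1"
    using e1 e2 e3 e4 e5 unfolding u1_u2_u3_u4_u5_def by (simp_all add: algebra_simps)
  have "u1 = - (y1 * y2 * y3 * y4 * y5) * u1"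
    using f(1) unfolding f(2) f(3) f(4) f(5) by (simp add: algebra_simps)
  then have "u1 * (1 + y1 * y2 * y3 * y4 * y5) = 0" by (simp add: algebra_simps)
  moreover have "1 + y1 * y2 * y3 * y4 * y5 > 0" using assms(1-5) by (simp add: add_pos_pos)
  ultimately have "u1 = 0" by simp
  then have "u5 = 0" using f(5) by simp
  then have "u4 = 0" using f(4) by simp
  then have "u3 = 0" using f(3) by simp
  then have "u2 = 0" using f(2) by simp
  then show ?thesis using \<open>u1 = 0\<close> \<open>u3 = 0\<close> \<open>u4 = 0\<close> \<open>u5 = 0\<close>
    unfolding u1_u2_u3_u4_u5_def by linarith
qed

lemma transpose_HornB_of_kernel:
  assumes "\<And>i. y i > 0" "transpose (HornB_of y) *v w = 0"
  shows "w = 0"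
proof -
  have "(transpose (HornB_of y) *v w) $ k = 0" for k using assms(2) by simp
  from this[of 1] this[of 2] this[of 3] this[of 4] this[of 5] have "w$1 + (y 1 + 1) * w$2 + y 1 * w$3 = 0" "w$2 + (y 2 + 1) * w$3 + y 2 * w$4 = 0"
    "w$3 + (y 3 + 1) * w$4 + y 3 * w$5 = 0" "w$4 + (y 4 + 1) * w$5 + y 4 * w$1 = 0"
    "w$5 + (y 5 + 1) * w$1 + y 5 * w$2 = 0"
    by (simp_all add: matrix_vector_mult_def transpose_def sum_UNIV_5 HornB_of_def HornB_def
        algebra_simps)
  then have "w$1 = 0 \<and> w$2 = 0 \<and> w$3 = 0 \<and> w$4 = 0 \<and> w$5 = 0"
    using assms(1) by (intro cyclic_system_eq_0) auto
  then have "w $ i = 0" for i using exhaust_5[of i] by auto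
  then show ?thesis by (simp add: vec_eq_iff)
qed

lemma phi5_HornB_of_eq_sum_outer:
  "phi5 (HornB_of y ** diag5 a) = (\<Sum>k\<in>UNIV. outer (column k (HornB_of y ** diag5 a)))"
  unfolding phi5_def by (rule mult_transpose_eq_sum_outer)

lemma phi5_HornB_of_nth:
  fixes y a :: "5 \<Rightarrow> real"
  defines "N \<equiv> phi5 (HornB_of y ** diag5 a)"
  shows "N $ i $ (i+2) = y i * (a i)\<^sup>2"
    and "N $ i $ (i+1) - N $ i $ (i+2) - N $ (i+4) $ (i+1) = (a i)\<^sup>2 + (y (i+4) * a (i+4))\<^sup>2"
    and "N $ i $ i = N $ i $ (i+1) + N $ (i+4) $ i - N $ i $ (i+2) - N $ (i+3) $ i"
proof -
  have pat: "horn_zero_pattern (id k) (column k (HornB_of y ** diag5 a))" for k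
    using horn_zero_pattern_column_HornB_of by simp
  have single: "{k \<in> UNIV. id k = j} = {j}" for j :: 5 by auto
  show "N $ i $ (i+2) = y i * (a i)\<^sup>2"
    unfolding N_def phi5_HornB_of_eq_sum_outer sum_outer_horn_zeros_nth_2[OF finite pat] single
    by (simp add: column_HornB_of_nth power2_eq_square)
  have "column (i+4) (HornB_of y ** diag5 a) $ (i+1) = y (i+4) * a (i+4)"
    using column_HornB_of_nth(2)[of "i+4"] by simp
  then show "N $ i $ (i+1) - N $ i $ (i+2) - N $ (i+4) $ (i+1) = (a i)\<^sup>2 + (y (i+4) * a (i+4))\<^sup>2"
    unfolding N_def phi5_HornB_of_eq_sum_outer sum_outer_horn_zeros_nth_1[OF finite pat] single
    by (simp add: column_HornB_of_nth)
  show "N $ i $ i = N $ i $ (i+1) + N $ (i+4) $ i - N $ i $ (i+2) - N $ (i+3) $ i"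
    unfolding N_def phi5_HornB_of_eq_sum_outer using pat by (intro sum_outer_horn_zeros_diag) blast
qed

text \<open>The parameters come from the fixed point \<open>t = a\<^sup>2\<close> of \<open>cyclic_fixed_point\<close>, with \<open>R\<close> the entries
  at distance two and \<open>P, Q\<close> the contributions of the zeros supported on \<open>{i, i+1, i+2}\<close>.\<close>

lemma sum_outer_horn_zeros_eq_phi5:
  assumes "finite L" "\<And>l. l \<in> L \<Longrightarrow> horn_zero_pattern (s l) (x l)"
    and pos: "\<And>i. (\<Sum>l\<in>L. outer (x l)) $ i $ (i+2) > 0"
  obtains y a where "\<And>i. y i > 0" "\<And>i. a i > 0" "(\<Sum>l\<in>L. outer (x l)) = phi5 (HornB_of y ** diag5 a)"
proof -
  define M where "M = (\<Sum>l\<in>L. outer (x l))"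
  define P where "P i = (\<Sum>l\<in>{l\<in>L. s l = i}. (x l $ i)\<^sup>2)" for i
  define Q where "Q i = (\<Sum>l\<in>{l\<in>L. s l = i}. (x l $ (i+2))\<^sup>2)" for i
  have "M $ i $ (i+2) = (\<Sum>l\<in>{l\<in>L. s l = i}. x l $ i * x l $ (i+2))" for i
    unfolding M_def by (rule sum_outer_horn_zeros_nth_2[OF assms(1,2)])
  then have CS: "(M $ i $ (i+2))\<^sup>2 \<le> P i * Q i" for i
    unfolding P_def Q_def by (simp only: Cauchy_Schwarz_ineq_sum)
  have m_eq: "M $ i $ (i+1) - M $ i $ (i+2) - M $ (i+4) $ (i+1) = P i + Q (i+4)" for i
    using sum_outer_horn_zeros_nth_1[OF assms(1,2), where i=i] unfolding M_def P_def Q_def by simp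
  have "P i \<ge> 0" "Q i \<ge> 0" for i unfolding P_def Q_def by (simp_all add: sum_nonneg)
  then obtain t where t: "\<And>i. t i > 0"
    "\<And>i. t i + (M $ (i+4) $ (i+4+2))\<^sup>2 / t (i+4) = M $ i $ (i+1) - M $ i $ (i+2) - M $ (i+4) $ (i+1)"
    using cyclic_fixed_point[of "\<lambda>i. M $ i $ (i+2)" P Q _ "\<lambda>i. i+4", OF pos[folded M_def] _ _ CS m_eq]
    by blast
  define a where "a i = sqrt (t i)" for i
  define y where "y i = M $ i $ (i+2) / t i" for i
  have a_sq: "(a i)\<^sup>2 = t i" for i unfolding a_def using t(1) by (simp add: less_imp_le)
  have y_a: "y i * (a i)\<^sup>2 = M $ i $ (i+2)" for i unfolding y_def a_sq using t(1)[of i] by simp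
  have y_a_sq: "(y i * a i)\<^sup>2 = (M $ i $ (i+2))\<^sup>2 / t i" for i
    unfolding y_def power_mult_distrib a_sq using t(1)[of i] by (simp add: power2_eq_square)
  define N where "N = phi5 (HornB_of y ** diag5 a)"
  have dist_2: "N $ i $ (i+2) = M $ i $ (i+2)" for i
    unfolding N_def phi5_HornB_of_nth(1) y_a ..
  have "N $ i $ (i+1) = M $ i $ (i+1)" for i
  proof -
    have "N $ i $ (i+1) = M $ i $ (i+2) + M $ (i+4) $ (i+1) + (a i)\<^sup>2 + (y (i+4) * a (i+4))\<^sup>2"
      using phi5_HornB_of_nth(2)[of y a i] dist_2[of i] dist_2[of "i+4"] unfolding N_def by simp
    also have "\<dots> = M $ i $ (i+1)"
      using t(2)[of i] unfolding a_sq y_a_sq by simp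
    finally show ?thesis .
  qed
  moreover have "M \<in> Sym5" unfolding M_def Sym5_iff using sum_outer_sym by blast
  moreover have "M $ i $ i = M $ i $ (i+1) + M $ (i+4) $ i - M $ i $ (i+2) - M $ (i+3) $ i" for i
    unfolding M_def using assms(2) by (intro sum_outer_horn_zeros_diag) blast
  ultimately have "M = N"
    using dist_2 phi5_HornB_of_nth(3) phi5_in_Sym5 unfolding N_def by (intro horn_face_eqI) auto
  moreover have "y i > 0" "a i > 0" for i
    unfolding y_def a_def using t(1) pos[folded M_def] by simp_all
  ultimately show thesis using that unfolding M_def N_def by blast
qed

lemma diag5_HornB_of_diag5_nth:
  "(diag5 d ** (HornB_of y ** diag5 z)) $ i $ k = d i * HornB_of y $ i $ k * z k"
  unfolding diag5_mult_nth mult_diag5_nth by (simp add: mult.assoc)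

lemma phi5_diag5_HornB_of_diag5_pos:
  assumes "\<And>i. d i > 0" "\<And>i. z i > 0" "\<And>i. y i > 0"
  shows "phi5 (diag5 d ** (HornB_of y ** diag5 z)) $ i $ j > 0"
proof -
  let ?X = "diag5 d ** (HornB_of y ** diag5 z)"
  have "0 \<le> d i" "0 \<le> z i" for i using assms(1,2)[of i] by simp_all
  then have X_nonneg: "0 \<le> ?X $ i $ k" for i k
    unfolding diag5_HornB_of_diag5_nth using HornB_of_nonneg[of y] assms(3) by simp
  obtain k where "HornB_of y $ i $ k > 0" "HornB_of y $ j $ k > 0"
    using HornB_of_common_pos[of y i j] assms(3) by blast
  then have "0 < ?X $ i $ k * ?X $ j $ k" unfolding diag5_HornB_of_diag5_nth using assms by simp
  also have "\<dots> \<le> (\<Sum>k\<in>UNIV. ?X $ i $ k * ?X $ j $ k)"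
    using X_nonneg by (intro member_le_sum) auto
  finally show ?thesis unfolding phi5_def matrix_matrix_mult_def transpose_def by simp
qed

lemma transpose_diag5_HornB_of_diag5_kernel:
  assumes "\<And>i. d i > 0" "\<And>i. z i > 0" "\<And>i. y i > 0"
    and "transpose (diag5 d ** (HornB_of y ** diag5 z)) *v x = 0"
  shows "x = 0"
proof -
  have "diag5 z *v (transpose (HornB_of y) *v (diag5 d *v x)) = 0"
    using assms(4) by (simp add: matrix_transpose_mul matrix_vector_mul_assoc matrix_mul_assoc)
  moreover have "z i \<noteq> 0" "d i \<noteq> 0" for i using assms(1,2)[of i] by simp_all
  ultimately have "transpose (HornB_of y) *v (diag5 d *v x) = 0"
    using diag5_mult_vec_eq_0[of z] by blast
  then have "diag5 d *v x = 0" using transpose_HornB_of_kernel[of y] assms(3) by blast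
  then show "x = 0" using diag5_mult_vec_eq_0[of d] \<open>\<And>i. d i \<noteq> 0\<close> by blast
qed

lemma phi5_in_V_Horn:
  assumes d: "\<And>i. d i > 0" and z: "\<And>i. z i > 0" and y: "\<And>i. y i > 0"
  shows "phi5 (diag5 d ** (HornB_of y ** diag5 z)) \<in> V_Horn"
proof -
  define Y where "Y = HornB_of y ** diag5 z"
  define X where "X = diag5 d ** Y"
  have "0 \<le> X $ i $ j" for i j
    unfolding X_def Y_def diag5_HornB_of_diag5_nth using d z HornB_of_nonneg[of y] y
    by (simp add: less_imp_le)
  then have CP: "phi5 X \<in> CP5" unfolding phi5_def by (rule mult_transpose_in_CP5)
  define e where "e i = 1 / d i" for i
  have e: "e i > 0" for i unfolding e_def using d by simp
  have "d i \<noteq> 0" for i using d[of i] by simp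
  then have "(\<chi> i. e i * column k X $ i) = column k Y" for k
    unfolding X_def e_def column_def diag5_mult_nth by (simp add: vec_eq_iff)
  then have orth: "inner5 (phi5 X) (diag5 e ** Horn ** diag5 e) = 0"
    unfolding phi5_def mult_transpose_eq_sum_outer inner5_sum_outer_diag_Horn Y_def
    by (simp add: horn_form_zero_pattern[OF horn_zero_pattern_column_HornB_of])
  obtain c where "c > 0" "\<And>x. c * (norm x)\<^sup>2 \<le> x \<bullet> (phi5 X *v x)"
    using mult_transpose_coercive[of X] transpose_diag5_HornB_of_diag5_kernel[of d z y] d z y
    unfolding phi5_def X_def Y_def by blast
  then have "phi5 X \<in> (top_of_set Sym5) interior_of DNN5"
    using phi5_diag5_HornB_of_diag5_pos[of d z y] d z y phi5_in_Sym5
    unfolding X_def Y_def by (intro DNN5_interior_ofI) auto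
  moreover have "phi5 X \<in> (top_of_set Sym5) frontier_of CP5"
    using CP e orth by (rule CP5_frontier_ofI)
  ultimately have "phi5 X \<in> V_Horn" unfolding V_Horn_def using e orth by blast
  then show ?thesis unfolding X_def Y_def .
qed

lemma CP5_orth_diag_Horn_zeros:
  fixes k :: nat
  assumes "\<forall>l<k. \<forall>i. 0 \<le> b l $ i" "\<And>i. 0 \<le> d i"
    and "inner5 (\<Sum>l<k. outer (b l)) (diag5 d ** Horn ** diag5 d) = 0"
  obtains s where "\<And>l. l < k \<Longrightarrow> horn_zero_pattern (s l) (\<chi> i. d i * b l $ i)"
proof -
  define x where "x l = (\<chi> i. d i * b l $ i)" for l
  have x_nonneg: "0 \<le> x l $ i" if "l < k" for l i
    unfolding x_def using assms(1,2) that by simp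
  have "(\<Sum>l<k. horn_form (x l)) = 0"
    using assms(3) unfolding inner5_sum_outer_diag_Horn x_def .
  then have "horn_form (x l) = 0" if "l < k" for l
    using that x_nonneg by (subst (asm) sum_nonneg_eq_0_iff) (auto intro: horn_form_nonneg)
  then have "\<forall>l. \<exists>s. l < k \<longrightarrow> horn_zero_pattern s (x l)"
    using x_nonneg horn_form_eq_0_imp_pattern by metis
  then show thesis using that unfolding x_def by metis
qed

lemma V_Horn_subset_phi5_Z_Horn:
  assumes "A \<in> V_Horn"
  shows "A \<in> phi5 ` Z_Horn"
proof -
  obtain d where d: "\<And>i. d i > 0" and orth: "inner5 A (diag5 d ** Horn ** diag5 d) = 0"
    using assms unfolding V_Horn_def by blast
  have "A \<in> CP5" using assms CP5_frontier_of_subset unfolding V_Horn_def by blast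
  then obtain k :: nat and b where b: "\<forall>l<k. \<forall>i. 0 \<le> b l $ i" "A = (\<Sum>l<k. outer (b l))"
    using CP5_iff_sum_outer by blast
  define x where "x l = (\<chi> i. d i * b l $ i)" for l
  obtain s where s: "\<And>l. l < k \<Longrightarrow> horn_zero_pattern (s l) (x l)"
    using CP5_orth_diag_Horn_zeros[OF b(1) _ orth[unfolded b(2)]] d less_imp_le
    unfolding x_def by blast
  define M where "M = (\<Sum>l<k. outer (x l))"
  have M_nth: "M $ i $ j = d i * A $ i $ j * d j" for i j
    unfolding M_def b(2) sum_outer_nth x_def by (simp add: sum_distrib_left sum_distrib_right mult_ac)
  moreover have "A $ i $ j > 0" for i j
    using assms DNN5_interior_of_pos unfolding V_Horn_def by blast
  ultimately have "M $ i $ (i+2) > 0" for i using d by simp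
  then obtain y a where y: "\<And>i. y i > 0" and a: "\<And>i. a i > 0"
    and M: "M = phi5 (HornB_of y ** diag5 a)"
    using sum_outer_horn_zeros_eq_phi5[of "{..<k}" s x] s unfolding M_def by blast
  define e where "e i = 1 / d i" for i
  have "d i \<noteq> 0" for i using d[of i] by simp
  then have "A = diag5 e ** M ** diag5 e"
    unfolding e_def by (simp add: vec_eq_iff diag5_mult_nth mult_diag5_nth M_nth)
  then have "A = phi5 (diag5 e ** (HornB_of y ** diag5 a))"
    unfolding M phi5_diag5_mult .
  moreover have "\<And>i. e i > 0" unfolding e_def using d by simp
  ultimately show ?thesis unfolding Z_Horn_eq using y a by blast
qed

theorem theorem2p6:
  shows "V_Horn = phi5 ` Z_Horn"
proof
  show "V_Horn \<subseteq> phi5 ` Z_Horn" using V_Horn_subset_phi5_Z_Horn by blast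
  show "phi5 ` Z_Horn \<subseteq> V_Horn" unfolding Z_Horn_eq using phi5_in_V_Horn by blast
qed

end
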